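(* Consider a finite-state, finite-action SMDP satisfying (M) that is weakly communicating, and let $f$ satisfy (F). Let $\bar\alpha\in(0,\min_{(s,a)}t_{sa}]$ and $h_\infty(q)=\mathcal{T}^o(q)-q-\bar\alpha f_\infty(q)$. Then the origin is the unique globally asymptotically stable equilibrium of the ODE $\dot x(t)=h_\infty(x(t))$.
   Context: $\mathcal{S},\mathcal{A}$ are finite, $d=|\mathcal{S}\times\mathcal{A}|$, and $\mathbf{1}$ is the all-ones vector. For each $(s,a)$, $\mathbb{P}_{sa}$ is a Borel probability measure on $\mathcal{S}\times\mathbb{R}_+\times\mathbb{R}$, the joint law of (next state $S$, holding time $\tau$, reward $R$). (M): (i) for some $\epsilon>0$, $\mathbb{P}_{sa}(\tau\le\epsilon)<1$ for all $(s,a)$; (ii) $\mathbb{E}_{sa}\tau^2,\mathbb{E}_{sa}R^2<\infty$. Let $t_{sa}=\mathbb{E}_{sa}\tau>0$ and $p^a_{ss'}=\mathbb{P}_{sa}(S=s')$. Weakly communicating means there is a unique closed communicating class (a set of states, each reachable from every other under some policy, which no policy can leave) and all other states are transient under every policy. (F): $g$ is SISTr at $x$ if $c\mapsto g(x+c\mathbf{1})$ is strictly increasing and onto $\mathbb{R}$; (i) $f:\mathbb{R}^d\to\mathbb{R}$ is Lipschitz and SISTr at every point; (ii) $f(cx)/c\to f_\infty(x)$ pointwise as $c\uparrow\infty$, with $f_\infty$ SISTr at $0$. $\mathcal{T}^o(q)(s,a)=\frac{\bar\alpha}{t_{sa}}\sum_{s'}p^a_{ss'}\max_{a'}q(s',a')+(1-\frac{\bar\alpha}{t_{sa}})q(s,a)$.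 A point is a globally asymptotically stable equilibrium if every solution converges to it and it is Lyapunov stable. *)

theory Defs
  imports "HOL-Probability.Probability"
begin

text \<open>An SMDP kernel: for each (s,a) a probability measure on S x R x R, the joint law of
  (next state, holding time, reward).\<close>

type_synonym ('s,'a) smdp = "'s \<Rightarrow> 'a \<Rightarrow> ('s \<times> real \<times> real) measure"

definition holding :: "'s \<times> real \<times> real \<Rightarrow> real" where
  "holding \<omega> = fst (snd \<omega>)"

definition reward :: "'s \<times> real \<times> real \<Rightarrow> real" where
  "reward \<omega> = snd (snd \<omega>)"

definition smdp_kernel :: "('s::finite,'a::finite) smdp \<Rightarrow> bool" where
  "smdp_kernel P \<longleftrightarrow> (\<forall>s a. prob_space (P s a) \<and>
      sets (P s a) = sets (count_space UNIV \<Otimes>\<^sub>M (borel \<Otimes>\<^sub>M borel)) \<and>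
      (AE \<omega> in P s a. 0 \<le> holding \<omega>))"

definition assumption_M :: "('s::finite,'a::finite) smdp \<Rightarrow> bool" where
  "assumption_M P \<longleftrightarrow>
     (\<exists>\<epsilon>>0. \<forall>s a. measure (P s a) {\<omega> \<in> space (P s a). holding \<omega> \<le> \<epsilon>} < 1) \<and>
     (\<forall>s a. integrable (P s a) (\<lambda>\<omega>. (holding \<omega>)\<^sup>2) \<and> integrable (P s a) (\<lambda>\<omega>. (reward \<omega>)\<^sup>2))"

definition tmean :: "('s,'a) smdp \<Rightarrow> 's \<Rightarrow> 'a \<Rightarrow> real" where
  "tmean P s a = (\<integral>\<omega>. holding \<omega> \<partial>P s a)"

definition ptrans :: "('s,'a) smdp \<Rightarrow> 's \<Rightarrow> 'a \<Rightarrow> 's \<Rightarrow> real" where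
  "ptrans P s a s' = measure (P s a) {\<omega> \<in> space (P s a). fst \<omega> = s'}"

definition is_policy :: "('s::finite \<Rightarrow> 'a::finite \<Rightarrow> real) \<Rightarrow> bool" where
  "is_policy \<pi> \<longleftrightarrow> (\<forall>s a. 0 \<le> \<pi> s a) \<and> (\<forall>s. (\<Sum>a\<in>UNIV. \<pi> s a) = 1)"

definition policy_graph :: "('s::finite,'a::finite) smdp \<Rightarrow> ('s \<Rightarrow> 'a \<Rightarrow> real) \<Rightarrow> ('s \<times> 's) set" where
  "policy_graph P \<pi> = {(s, s'). (\<Sum>a\<in>UNIV. \<pi> s a * ptrans P s a s') > 0}"

definition reachable_under :: "('s::finite,'a::finite) smdp \<Rightarrow> ('s \<Rightarrow> 'a \<Rightarrow> real) \<Rightarrow> 's \<Rightarrow> 's \<Rightarrow> bool" where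
  "reachable_under P \<pi> s s' \<longleftrightarrow> (s, s') \<in> (policy_graph P \<pi>)\<^sup>*"

text \<open>Transience of a state in the finite Markov chain induced by \<pi>: it reaches some state
  from which it cannot be reached back.\<close>
definition transient_under :: "('s::finite,'a::finite) smdp \<Rightarrow> ('s \<Rightarrow> 'a \<Rightarrow> real) \<Rightarrow> 's \<Rightarrow> bool" where
  "transient_under P \<pi> s \<longleftrightarrow> (\<exists>s'. reachable_under P \<pi> s s' \<and> \<not> reachable_under P \<pi> s' s)"

definition communicating :: "('s::finite,'a::finite) smdp \<Rightarrow> 's set \<Rightarrow> bool" where
  "communicating P C \<longleftrightarrow> (\<forall>s\<in>C. \<forall>s'\<in>C. \<exists>\<pi>. is_policy \<pi> \<and> reachable_under P \<pi> s s')"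

definition closed_set :: "('s::finite,'a::finite) smdp \<Rightarrow> 's set \<Rightarrow> bool" where
  "closed_set P C \<longleftrightarrow> (\<forall>s\<in>C. \<forall>a s'. ptrans P s a s' > 0 \<longrightarrow> s' \<in> C)"

definition closed_comm_class :: "('s::finite,'a::finite) smdp \<Rightarrow> 's set \<Rightarrow> bool" where
  "closed_comm_class P C \<longleftrightarrow> C \<noteq> {} \<and> communicating P C \<and> closed_set P C"

definition weakly_communicating :: "('s::finite,'a::finite) smdp \<Rightarrow> bool" where
  "weakly_communicating P \<longleftrightarrow> (\<exists>C. closed_comm_class P C \<and>
      (\<forall>C'. closed_comm_class P C' \<longrightarrow> C' = C) \<and>
      (\<forall>s. s \<notin> C \<longrightarrow> (\<forall>\<pi>. is_policy \<pi> \<longrightarrow> transient_under P \<pi> s)))"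

definition SISTr :: "(real^'n \<Rightarrow> real) \<Rightarrow> real^'n \<Rightarrow> bool" where
  "SISTr g x \<longleftrightarrow> strict_mono (\<lambda>c::real. g (x + c *\<^sub>R (1::real^'n))) \<and>
                   surj (\<lambda>c::real. g (x + c *\<^sub>R (1::real^'n)))"

definition assumption_F :: "(real^'n \<Rightarrow> real) \<Rightarrow> (real^'n \<Rightarrow> real) \<Rightarrow> bool" where
  "assumption_F f finf \<longleftrightarrow> (\<exists>L. L-lipschitz_on UNIV f) \<and> (\<forall>x. SISTr f x) \<and>
     (\<forall>x. ((\<lambda>c. f (c *\<^sub>R x) / c) \<longlongrightarrow> finf x) at_top) \<and> SISTr finf 0"

definition Tzero :: "('s::finite,'a::finite) smdp \<Rightarrow> real \<Rightarrow> real^('s \<times> 'a) \<Rightarrow> real^('s \<times> 'a)" where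
  "Tzero P \<alpha> q = (\<chi> sa. case sa of (s, a) \<Rightarrow>
      \<alpha> / tmean P s a * (\<Sum>s'\<in>UNIV. ptrans P s a s' * (MAX a'. q $ (s', a')))
      + (1 - \<alpha> / tmean P s a) * q $ (s, a))"

definition ode_solution :: "('v::real_normed_vector \<Rightarrow> 'v) \<Rightarrow> (real \<Rightarrow> 'v) \<Rightarrow> bool" where
  "ode_solution h x \<longleftrightarrow> (\<forall>t\<ge>0. (x has_vector_derivative h (x t)) (at t within {0..}))"

definition lyapunov_stable :: "('v::real_normed_vector \<Rightarrow> 'v) \<Rightarrow> 'v \<Rightarrow> bool" where
  "lyapunov_stable h z \<longleftrightarrow> (\<forall>\<epsilon>>0. \<exists>\<delta>>0. \<forall>x. ode_solution h x \<and> dist (x 0) z < \<delta> \<longrightarrow>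
       (\<forall>t\<ge>0. dist (x t) z < \<epsilon>))"

definition GAS_equilibrium :: "('v::real_normed_vector \<Rightarrow> 'v) \<Rightarrow> 'v \<Rightarrow> bool" where
  "GAS_equilibrium h z \<longleftrightarrow> h z = 0 \<and>
     (\<forall>x. ode_solution h x \<longrightarrow> (x \<longlongrightarrow> z) at_top) \<and> lyapunov_stable h z"

end

theory Submission
  imports Defs
begin

text \<open>Write a solution as \<open>x = y + r \<cdot> 1\<close>, where \<open>r\<close> accumulates the feedback
  \<open>-\<alpha> finf(x)\<close>. Since \<open>T\<^sup>o\<close> commutes with diagonal shifts, \<open>y\<close> solves
  \<open>y' = T\<^sup>o(y) - y\<close>. Along that flow a maximum principle keeps the largest entry from increasing
  and the smallest from decreasing, and over a fixed time span the spread contracts by a fixed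
  factor: either some entry in the closed class is high, and positive transition probabilities carry
  this backwards to every state, raising the minimum; or the whole class is low, and since every
  state is eventually forced into the class under every action, the maximum drops. So all entries
  of \<open>y\<close> tend to one constant \<open>c\<close>. Then \<open>w = c + r\<close> solves \<open>w' = -\<alpha> finf(w \<cdot> 1 + o(1))\<close>;
  as \<open>finf\<close> is Lipschitz and strictly increasing along \<open>1\<close> with \<open>finf 0 = 0\<close>, \<open>w \<rightarrow> 0\<close>, hence
  \<open>x \<rightarrow> 0\<close>. The same estimates for a small initial value give Lyapunov stability, and as the zero
  function is a solution, no other point can be globally attracting.\<close>

section \<open>Comparison principles for differential inequalities\<close>

lemma negativity_persists:
  fixes g g' :: "'i \<Rightarrow> real \<Rightarrow> real"
  assumes "finite I"
    and cont: "\<And>i. i \<in> I \<Longrightarrow> continuous_on {t0..} (g i)"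
    and deriv: "\<And>i t. i \<in> I \<Longrightarrow> t0 < t \<Longrightarrow> (g i has_real_derivative g' i t) (at t)"
    and start: "\<And>i. i \<in> I \<Longrightarrow> g i t0 < 0"
    and touch: "\<And>i t. i \<in> I \<Longrightarrow> t0 < t \<Longrightarrow> (\<forall>j\<in>I. g j t \<le> 0) \<Longrightarrow> g i t = 0 \<Longrightarrow> g' i t < 0"
    and "i \<in> I" "t0 \<le> t"
  shows "g i t < 0"
proof (rule ccontr)
  assume "\<not> g i t < 0"
  define S where "S = (\<Union>j\<in>I. {s \<in> {t0..}. 0 \<le> g j s})"
  have "closed S"
    unfolding S_def using \<open>finite I\<close> by (intro closed_UN ballI continuous_on_closed_Collect_le cont) auto
  moreover have "t \<in> S"
    using \<open>\<not> g i t < 0\<close> \<open>i \<in> I\<close> \<open>t0 \<le> t\<close> unfolding S_def by (auto simp: not_less)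
  moreover have "bdd_below S"
    unfolding S_def by (auto intro!: bdd_belowI[of _ t0])
  ultimately have "Inf S \<in> S"
    using closed_contains_Inf by (metis empty_iff)
  define ts where "ts = Inf S"
  obtain k where k: "k \<in> I" "t0 \<le> ts" "0 \<le> g k ts"
    using \<open>Inf S \<in> S\<close> unfolding S_def ts_def by auto
  have below: "g j s < 0" if "j \<in> I" "t0 \<le> s" "s < ts" for j s
  proof (rule ccontr)
    assume "\<not> g j s < 0"
    then have "s \<in> S" using that unfolding S_def by (auto simp: not_less)
    then have "ts \<le> s" unfolding ts_def by (rule cInf_lower) fact
    with \<open>s < ts\<close> show False by simp
  qed
  have "t0 < ts" using k start[OF k(1)] by (fastforce simp: le_less)
  have "g j ts \<le> 0" if "j \<in> I" for j
  proof -
    have "closure {t0..<ts} \<subseteq> {s \<in> {t0..}. g j s \<le> 0}"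
      using below[OF that] cont[OF that]
      by (intro closure_minimal continuous_on_closed_Collect_le) (auto intro: less_imp_le)
    moreover have "ts \<in> closure {t0..<ts}" using \<open>t0 < ts\<close> by simp
    ultimately show ?thesis by blast
  qed
  then have "g' k ts < 0" using touch[OF k(1) \<open>t0 < ts\<close>] k by force
  then obtain d where "d > 0" and d: "\<And>h. 0 < h \<Longrightarrow> h < d \<Longrightarrow> g k ts < g k (ts - h)"
    using DERIV_neg_dec_left[OF deriv[OF k(1) \<open>t0 < ts\<close>]] by blast
  define h where "h = min (d/2) (ts - t0)"
  have "0 < h" "h < d" "h \<le> ts - t0" using \<open>d > 0\<close> \<open>t0 < ts\<close> unfolding h_def by auto
  then show False using d[of h] below[OF k(1), of "ts - h"] k by auto
qed

lemma max_principle: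
  fixes u u' :: "'i \<Rightarrow> real \<Rightarrow> real"
  assumes "finite I"
    and cont: "\<And>i. i \<in> I \<Longrightarrow> continuous_on {t0..} (u i)"
    and deriv: "\<And>i t. i \<in> I \<Longrightarrow> t0 < t \<Longrightarrow> (u i has_real_derivative u' i t) (at t)"
    and start: "\<And>i. i \<in> I \<Longrightarrow> u i t0 \<le> M"
    and at_max: "\<And>i t. i \<in> I \<Longrightarrow> t0 < t \<Longrightarrow> (\<forall>j\<in>I. u j t \<le> u i t) \<Longrightarrow> u' i t \<le> 0"
    and "i \<in> I" "t0 \<le> t"
  shows "u i t \<le> M"
proof (rule field_le_epsilon)
  fix e :: real assume "0 < e"
  \<comment> \<open>compare with the strictly increasing barrier \<open>M + e exp (s - t)\<close>, equal to \<open>M + e\<close> at time \<open>t\<close>\<close>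
  have "u i t - (M + e * exp (t - t)) < 0"
  proof (rule negativity_persists[where g = "\<lambda>i s. u i s - (M + e * exp (s - t))"
        and g' = "\<lambda>i s. u' i s - e * exp (s - t)"])
    fix j s assume j: "j \<in> I" and "t0 < s"
    show "((\<lambda>s. u j s - (M + e * exp (s - t))) has_real_derivative u' j s - e * exp (s - t)) (at s)"
      using deriv[OF j \<open>t0 < s\<close>] by (auto intro!: derivative_eq_intros)
    assume "\<forall>k\<in>I. u k s - (M + e * exp (s - t)) \<le> 0" "u j s - (M + e * exp (s - t)) = 0"
    then have "u' j s \<le> 0" using at_max[OF j \<open>t0 < s\<close>] by auto
    then show "u' j s - e * exp (s - t) < 0" using mult_pos_pos[OF \<open>0 < e\<close> exp_gt_zero, of "s - t"] by linarith
  next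
    show "u j t0 - (M + e * exp (t0 - t)) < 0" if "j \<in> I" for j
      using start[OF that] mult_pos_pos[OF \<open>0 < e\<close> exp_gt_zero, of "t0 - t"] by linarith
  qed (use assms in \<open>auto intro!: continuous_intros\<close>)
  then show "u i t \<le> M + e" by simp
qed

lemma relaxation_lower_bound:
  fixes g g' :: "real \<Rightarrow> real"
  assumes "a \<le> t" and cont: "continuous_on {a..t} g"
    and deriv: "\<And>s. a < s \<Longrightarrow> s < t \<Longrightarrow> (g has_real_derivative g' s) (at s)"
    and rate: "\<And>s. a < s \<Longrightarrow> s < t \<Longrightarrow> b * (A - g s) \<le> g' s"
  shows "A + exp (- b * (t - a)) * (g a - A) \<le> g t"
proof -
  define k where "k s = exp (b * s) * (g s - A)" for s
  have "k a \<le> k t"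
  proof (rule DERIV_nonneg_imp_increasing_open[OF \<open>a \<le> t\<close>])
    fix s assume s: "a < s" "s < t"
    have "(k has_real_derivative exp (b * s) * (g' s - b * (A - g s))) (at s)"
      unfolding k_def using deriv[OF s] by (auto intro!: derivative_eq_intros simp: algebra_simps)
    moreover have "0 \<le> exp (b * s) * (g' s - b * (A - g s))"
      using rate[OF s] by simp
    ultimately show "\<exists>y. (k has_real_derivative y) (at s) \<and> 0 \<le> y" by blast
  qed (unfold k_def, intro continuous_intros cont)
  then have "exp (- b * t) * (exp (b * a) * (g a - A)) \<le> exp (- b * t) * (exp (b * t) * (g t - A))"
    unfolding k_def by (intro mult_left_mono) auto
  then have "exp (- b * t + b * a) * (g a - A) \<le> g t - A"
    by (simp add: mult.assoc[symmetric] exp_add[symmetric])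
  then show ?thesis by (simp add: algebra_simps)
qed

lemma relaxation_gain_lower:
  fixes g g' :: "real \<Rightarrow> real"
  assumes "a + 1 \<le> t" and "continuous_on {a..t} g"
    and "\<And>s. a < s \<Longrightarrow> s < t \<Longrightarrow> (g has_real_derivative g' s) (at s)"
    and "\<And>s. a < s \<Longrightarrow> s < t \<Longrightarrow> b * (A - g s) \<le> g' s"
    and "0 < b" "m \<le> g a" "m \<le> A"
  shows "m + (A - m) * (1 - exp (- b)) \<le> g t"
proof -
  have decay: "exp (- b * (t - a)) \<le> exp (- b)"
    using \<open>0 < b\<close> \<open>a + 1 \<le> t\<close> by (simp add: mult_le_cancel_left1)
  have "exp (- b) * (m - A) \<le> exp (- b * (t - a)) * (g a - A)"
  proof -
    have "exp (- b) * (m - A) \<le> exp (- b * (t - a)) * (m - A)"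
      using \<open>m \<le> A\<close> decay by (intro mult_right_mono_neg) auto
    also have "\<dots> \<le> exp (- b * (t - a)) * (g a - A)"
      using \<open>m \<le> g a\<close> by (intro mult_left_mono) auto
    finally show ?thesis .
  qed
  moreover have "A + exp (- b * (t - a)) * (g a - A) \<le> g t"
    by (rule relaxation_lower_bound) (use assms in auto)
  ultimately show ?thesis by (simp add: algebra_simps)
qed

lemma relaxation_gain_upper:
  fixes g g' :: "real \<Rightarrow> real"
  assumes "a + 1 \<le> t" and "continuous_on {a..t} g"
    and "\<And>s. a < s \<Longrightarrow> s < t \<Longrightarrow> (g has_real_derivative g' s) (at s)"
    and "\<And>s. a < s \<Longrightarrow> s < t \<Longrightarrow> g' s \<le> b * (A - g s)"
    and "0 < b" "g a \<le> M" "A \<le> M"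
  shows "g t \<le> M - (M - A) * (1 - exp (- b))"
proof -
  have "- M + (- A - - M) * (1 - exp (- b)) \<le> - g t"
  proof (rule relaxation_gain_lower[where g = "\<lambda>s. - g s" and g' = "\<lambda>s. - g' s" and a = a])
    show "continuous_on {a..t} (\<lambda>s. - g s)" using assms(2) by (rule continuous_on_minus)
    show "((\<lambda>s. - g s) has_real_derivative - g' s) (at s)" if "a < s" "s < t" for s
      using assms(3)[OF that] by (rule DERIV_minus)
    show "b * (- A - - g s) \<le> - g' s" if "a < s" "s < t" for s
      using assms(4)[OF that] by (simp add: algebra_simps)
  qed (use assms in auto)
  then show ?thesis by (simp add: algebra_simps)
qed

lemma stays_in_interval:
  fixes w w' :: "real \<Rightarrow> real"
  assumes cont: "continuous_on {t0..} w"
    and deriv: "\<And>t. t0 < t \<Longrightarrow> (w has_real_derivative w' t) (at t)"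
    and start: "\<bar>w t0\<bar> < \<rho>"
    and inward: "\<And>t. t0 < t \<Longrightarrow> \<bar>w t\<bar> = \<rho> \<Longrightarrow> w t * w' t < 0"
    and "t0 \<le> t"
  shows "\<bar>w t\<bar> < \<rho>"
proof -
  have "0 < \<rho>" using start by linarith
  then have inside_iff: "\<bar>v\<bar> < \<rho> \<longleftrightarrow> v\<^sup>2 - \<rho>\<^sup>2 < 0" for v
    using abs_le_square_iff[of \<rho> v] by (simp add: not_le[symmetric])
  have "(w t)\<^sup>2 - \<rho>\<^sup>2 < 0"
  proof (rule negativity_persists[where I = "{()}" and g = "\<lambda>_ s. (w s)\<^sup>2 - \<rho>\<^sup>2"
        and g' = "\<lambda>_ s. 2 * (w s * w' s)"])
    show "\<And>s. t0 < s \<Longrightarrow> ((\<lambda>s. (w s)\<^sup>2 - \<rho>\<^sup>2) has_real_derivative 2 * (w s * w' s)) (at s)"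
      using deriv by (auto intro!: derivative_eq_intros)
    show "(w t0)\<^sup>2 - \<rho>\<^sup>2 < 0"
      using start inside_iff by blast
    fix s assume "t0 < s" "(w s)\<^sup>2 - \<rho>\<^sup>2 = 0"
    then have "\<bar>w s\<bar>\<^sup>2 = \<rho>\<^sup>2" by simp
    then have "\<bar>w s\<bar> = \<rho>"
      using \<open>0 < \<rho>\<close> by (subst (asm) power2_eq_iff_nonneg) auto
    then show "2 * (w s * w' s) < 0" using inward \<open>t0 < s\<close> by simp
  qed (use cont \<open>t0 \<le> t\<close> in \<open>auto intro!: continuous_intros\<close>)
  then show ?thesis using inside_iff by blast
qed

lemma reaches_interval:
  fixes w w' :: "real \<Rightarrow> real"
  assumes cont: "continuous_on {t0..} w"
    and deriv: "\<And>t. t0 < t \<Longrightarrow> (w has_real_derivative w' t) (at t)"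
    and inward: "\<And>t. t0 < t \<Longrightarrow> \<rho> \<le> \<bar>w t\<bar> \<Longrightarrow> w t * w' t \<le> - \<kappa>"
    and "0 < \<kappa>"
  shows "\<exists>t\<ge>t0. \<bar>w t\<bar> < \<rho>"
proof (rule ccontr)
  assume "\<not> ?thesis"
  then have far: "\<And>t. t0 < t \<Longrightarrow> \<rho> \<le> \<bar>w t\<bar>" by (auto simp: not_less)
  \<comment> \<open>\<open>w\<^sup>2\<close> would decrease at rate at least \<open>2\<kappa>\<close> forever\<close>
  define t where "t = t0 + ((w t0)\<^sup>2 + 1) / (2 * \<kappa>)"
  have "t0 \<le> t" unfolding t_def using \<open>0 < \<kappa>\<close> by simp
  have "(w t)\<^sup>2 + 2 * \<kappa> * t \<le> (w t0)\<^sup>2 + 2 * \<kappa> * t0"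
  proof (rule DERIV_nonpos_imp_decreasing_open[OF \<open>t0 \<le> t\<close>])
    fix s assume "t0 < s" "s < t"
    then have "((\<lambda>s. (w s)\<^sup>2 + 2 * \<kappa> * s) has_real_derivative 2 * (w s * w' s) + 2 * \<kappa>) (at s)"
      using deriv by (auto intro!: derivative_eq_intros)
    moreover have "2 * (w s * w' s) + 2 * \<kappa> \<le> 0"
      using inward[OF \<open>t0 < s\<close> far[OF \<open>t0 < s\<close>]] by simp
    ultimately show "\<exists>y. ((\<lambda>s. (w s)\<^sup>2 + 2 * \<kappa> * s) has_real_derivative y) (at s) \<and> y \<le> 0" by blast
  next
    show "continuous_on {t0..t} (\<lambda>s. (w s)\<^sup>2 + 2 * \<kappa> * s)"
      by (intro continuous_intros continuous_on_subset[OF cont]) auto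
  qed
  moreover have "2 * \<kappa> * (t - t0) = (w t0)\<^sup>2 + 1" unfolding t_def using \<open>0 < \<kappa>\<close> by simp
  ultimately have "(w t)\<^sup>2 \<le> -1" by (simp add: algebra_simps)
  then show False using zero_le_power2[of "w t"] by linarith
qed

section \<open>Convex combinations, exhausting chains and squeezed limits\<close>

lemma convex_combination_upper:
  fixes w v :: "'j \<Rightarrow> real"
  assumes "finite S" and w: "\<And>j. j \<in> S \<Longrightarrow> 0 \<le> w j" and "sum w S = 1"
    and v: "\<And>j. j \<in> S \<Longrightarrow> 0 < w j \<Longrightarrow> v j \<le> M" and "k \<in> S"
  shows "(\<Sum>j\<in>S. w j * v j) + w k * (M - v k) \<le> M"
proof -
  have gap: "0 \<le> w j * (M - v j)" if "j \<in> S" for j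
    using w[OF that] v[OF that] by (cases "w j = 0") auto
  have "(\<Sum>j\<in>S. w j * M) = M"
    using \<open>sum w S = 1\<close> by (simp add: sum_distrib_right[symmetric])
  then have "(\<Sum>j\<in>S. w j * v j) = M - (\<Sum>j\<in>S. w j * (M - v j))"
    by (simp add: right_diff_distrib sum_subtractf)
  moreover have "w k * (M - v k) \<le> (\<Sum>j\<in>S. w j * (M - v j))"
    using \<open>finite S\<close> \<open>k \<in> S\<close> gap by (intro member_le_sum) auto
  ultimately show ?thesis by simp
qed

lemma convex_combination_lower:
  fixes w v :: "'j \<Rightarrow> real"
  assumes "finite S" and "\<And>j. j \<in> S \<Longrightarrow> 0 \<le> w j" and "sum w S = 1"
    and "\<And>j. j \<in> S \<Longrightarrow> 0 < w j \<Longrightarrow> m \<le> v j" and "k \<in> S"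
  shows "m + w k * (v k - m) \<le> (\<Sum>j\<in>S. w j * v j)"
  using convex_combination_upper[of S w "\<lambda>j. - v j" "- m" k] assms
  by (simp add: sum_negf algebra_simps)

lemma finite_chain_exhausts:
  fixes A :: "nat \<Rightarrow> 'a::finite set"
  assumes "mono A" and "\<And>x. \<exists>j. x \<in> A j"
  shows "\<exists>J. A J = UNIV"
proof -
  obtain j where j: "\<And>x. x \<in> A (j x)" using assms(2) by metis
  have "x \<in> A (Max (range j))" for x
    using j[of x] monoD[OF \<open>mono A\<close>, of "j x" "Max (range j)"] by auto
  then show ?thesis by blast
qed

lemma monotone_squeeze_tendsto:
  fixes lo hi u :: "real \<Rightarrow> real"
  assumes lo: "\<And>s t. 0 \<le> s \<Longrightarrow> s \<le> t \<Longrightarrow> lo s \<le> lo t"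
    and hi: "\<And>s t. 0 \<le> s \<Longrightarrow> s \<le> t \<Longrightarrow> hi t \<le> hi s"
    and between: "\<And>t. 0 \<le> t \<Longrightarrow> lo t \<le> u t \<and> u t \<le> hi t"
    and gap: "((\<lambda>t. hi t - lo t) \<longlongrightarrow> 0) at_top"
  shows "(u \<longlongrightarrow> (INF t\<in>{0..}. hi t)) at_top"
proof -
  define c where "c = (INF t\<in>{0..}. hi t)"
  have lo_hi: "lo s \<le> hi t" if "0 \<le> s" "0 \<le> t" for s t
  proof -
    have m: "0 \<le> max s t" "s \<le> max s t" "t \<le> max s t" using that by auto
    then show ?thesis using lo[OF that(1) m(2)] hi[OF that(2) m(3)] between[OF m(1)] by linarith
  qed
  have c: "lo t \<le> c \<and> c \<le> hi t" if "0 \<le> t" for t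
  proof
    show "lo t \<le> c" unfolding c_def by (rule cINF_greatest) (use lo_hi that in auto)
    show "c \<le> hi t" unfolding c_def
      by (rule cINF_lower) (use that lo_hi[of 0] in \<open>auto intro!: bdd_belowI2\<close>)
  qed
  have "c - (hi t - lo t) \<le> u t" "u t \<le> c + (hi t - lo t)" if "0 \<le> t" for t
    using c[OF that] between[OF that] by linarith+
  then have "\<forall>\<^sub>F t in at_top. c - (hi t - lo t) \<le> u t" "\<forall>\<^sub>F t in at_top. u t \<le> c + (hi t - lo t)"
    by (blast intro: eventually_mono[OF eventually_ge_at_top[of 0]])+
  moreover have "((\<lambda>t. c - (hi t - lo t)) \<longlongrightarrow> c) at_top" "((\<lambda>t. c + (hi t - lo t)) \<longlongrightarrow> c) at_top"
    using tendsto_diff[OF tendsto_const gap, of c] tendsto_add[OF tendsto_const gap, of c] by simp_all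
  ultimately show ?thesis
    unfolding c_def[symmetric] by (rule tendsto_sandwich)
qed

lemma periodic_contraction_tendsto_zero:
  fixes d :: "real \<Rightarrow> real"
  assumes anti: "\<And>s t. 0 \<le> s \<Longrightarrow> s \<le> t \<Longrightarrow> d t \<le> d s"
    and nonneg: "\<And>t. 0 \<le> t \<Longrightarrow> 0 \<le> d t"
    and contr: "\<And>t. 0 \<le> t \<Longrightarrow> d (t + \<tau>) \<le> (1 - \<eta>) * d t"
    and "0 < \<eta>" "\<eta> \<le> 1" "0 \<le> \<tau>"
  shows "(d \<longlongrightarrow> 0) at_top"
proof -
  have geom: "d (real k * \<tau>) \<le> (1 - \<eta>) ^ k * d 0" for k
  proof (induction k)
    case (Suc k)
    have "real (Suc k) * \<tau> = real k * \<tau> + \<tau>" by (simp add: distrib_right)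
    then have "d (real (Suc k) * \<tau>) \<le> (1 - \<eta>) * d (real k * \<tau>)"
      using contr[of "real k * \<tau>"] \<open>0 \<le> \<tau>\<close> by simp
    also have "\<dots> \<le> (1 - \<eta>) * ((1 - \<eta>) ^ k * d 0)"
      using Suc \<open>\<eta> \<le> 1\<close> by (intro mult_left_mono) auto
    finally show ?case by simp
  qed simp
  have "(\<lambda>k. (1 - \<eta>) ^ k * d 0) \<longlonglongrightarrow> 0"
    using \<open>0 < \<eta>\<close> \<open>\<eta> \<le> 1\<close> by (intro tendsto_mult_left_zero LIMSEQ_power_zero) simp
  show ?thesis
  proof (rule tendstoI)
    fix e :: real assume "0 < e"
    then obtain k where k: "(1 - \<eta>) ^ k * d 0 < e"
      using order_tendstoD(2)[OF \<open>(\<lambda>k. (1 - \<eta>) ^ k * d 0) \<longlonglongrightarrow> 0\<close>] by (auto simp: eventually_sequentially)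
    have "dist (d t) 0 < e" if "real k * \<tau> \<le> t" for t
    proof -
      have "0 \<le> real k * \<tau>" using \<open>0 \<le> \<tau>\<close> by simp
      then have "0 \<le> d t" "d t \<le> d (real k * \<tau>)" using anti[OF _ that] nonneg[of t] that by auto
      then show ?thesis using geom[of k] k by (simp add: dist_real_def)
    qed
    then show "\<forall>\<^sub>F t in at_top. dist (d t) 0 < e"
      by (blast intro: eventually_mono[OF eventually_ge_at_top[of "real k * \<tau>"]])
  qed
qed

section \<open>Solutions of autonomous equations and their extreme entries\<close>

lemma ode_solution_continuous_on:
  "ode_solution h x \<Longrightarrow> continuous_on {0..} x"
  unfolding ode_solution_def continuous_on_eq_continuous_within
  by (auto intro: has_vector_derivative_continuous)

lemma ode_solution_nth_continuous_on:
  fixes x :: "real \<Rightarrow> real^'n"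
  assumes "ode_solution h x" and "0 \<le> t0"
  shows "continuous_on {t0..} (\<lambda>t. x t $ i)"
  using continuous_on_subset[OF ode_solution_continuous_on[OF assms(1)]] assms(2)
  by (intro continuous_on_component) auto

lemma ode_solution_nth_continuous_on_interval:
  fixes x :: "real \<Rightarrow> real^'n"
  assumes "ode_solution h x" and "0 \<le> a"
  shows "continuous_on {a..b} (\<lambda>t. x t $ i)"
  using ode_solution_nth_continuous_on[OF assms] by (rule continuous_on_subset) auto

lemma ode_solution_nth_derivative:
  fixes x :: "real \<Rightarrow> real^'n"
  assumes "ode_solution h x" and "0 < t"
  shows "((\<lambda>t. x t $ i) has_real_derivative h (x t) $ i) (at t)"
proof -
  have "at t within {0..} = at t"
    using \<open>0 < t\<close> by (intro at_within_interior) auto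
  moreover have "(x has_vector_derivative h (x t)) (at t within {0..})"
    using assms unfolding ode_solution_def by simp
  ultimately have "(x has_vector_derivative h (x t)) (at t)"
    by simp
  then show ?thesis
    by (auto simp: has_real_derivative_iff_has_vector_derivative
        intro: bounded_linear.has_vector_derivative[OF bounded_linear_vec_nth])
qed

definition max_entry :: "real^'n \<Rightarrow> real" where
  "max_entry v = Max (range (($) v))"

definition min_entry :: "real^'n \<Rightarrow> real" where
  "min_entry v = Min (range (($) v))"

lemma nth_le_max_entry: "v $ i \<le> max_entry v"
  unfolding max_entry_def by (rule Max_ge) auto

lemma min_entry_le_nth: "min_entry v \<le> v $ i"
  unfolding min_entry_def by (rule Min_le) auto

lemma max_entry_le_iff: "max_entry v \<le> b \<longleftrightarrow> (\<forall>i. v $ i \<le> b)"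
  unfolding max_entry_def by (subst Max_le_iff) auto

lemma le_min_entry_iff: "b \<le> min_entry v \<longleftrightarrow> (\<forall>i. b \<le> v $ i)"
  unfolding min_entry_def by (subst Min_ge_iff) auto

section \<open>Transition structure of a weakly communicating SMDP\<close>

lemma ptrans_nonneg: "0 \<le> ptrans P s a s'"
  unfolding ptrans_def by simp

lemma sum_ptrans_eq_1:
  assumes "smdp_kernel P"
  shows "(\<Sum>s'\<in>UNIV. ptrans P s a s') = 1"
proof -
  interpret prob_space "P s a" using assms unfolding smdp_kernel_def by blast
  have "fst \<in> measurable (P s a) (count_space UNIV)"
    using assms measurable_fst unfolding smdp_kernel_def by (metis measurable_cong_sets)
  then have events: "{\<omega> \<in> space (P s a). fst \<omega> = s'} \<in> events" for s'
    by (simp add: measurable_count_space_eq2_countable Int_def conj_commute)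
  have "(\<Sum>s'\<in>UNIV. ptrans P s a s') = prob (\<Union>s'. {\<omega> \<in> space (P s a). fst \<omega> = s'})"
    unfolding ptrans_def using events
    by (intro finite_measure_finite_Union[symmetric]) (auto simp: disjoint_family_on_def)
  also have "(\<Union>s'. {\<omega> \<in> space (P s a). fst \<omega> = s'}) = space (P s a)" by auto
  finally show ?thesis by (simp add: prob_space)
qed

definition transition_graph :: "('s::finite, 'a::finite) smdp \<Rightarrow> ('s \<times> 's) set" where
  "transition_graph P = {(s, s'). \<exists>a. 0 < ptrans P s a s'}"

lemma policy_graph_subset_transition_graph:
  assumes "is_policy \<pi>"
  shows "policy_graph P \<pi> \<subseteq> transition_graph P"
proof safe
  fix u v assume "(u, v) \<in> policy_graph P \<pi>"
  then have "0 < (\<Sum>a\<in>UNIV. \<pi> u a * ptrans P u a v)" unfolding policy_graph_def by simp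
  then obtain a where "0 < \<pi> u a * ptrans P u a v"
    using sum_nonpos[of UNIV "\<lambda>a. \<pi> u a * ptrans P u a v"] by (force simp: not_less)
  moreover have "0 \<le> \<pi> u a" using assms unfolding is_policy_def by blast
  ultimately have "0 < ptrans P u a v"
    using ptrans_nonneg[of P u a v] by (auto simp: zero_less_mult_iff)
  then show "(u, v) \<in> transition_graph P" unfolding transition_graph_def by blast
qed

lemma is_policy_deterministic: "is_policy (\<lambda>s a. if a = d s then 1 else 0)"
  unfolding is_policy_def by simp

lemma policy_graph_deterministic:
  "(u, v) \<in> policy_graph P (\<lambda>s a. if a = d s then 1 else 0) \<longleftrightarrow> 0 < ptrans P u (d u) v"
  unfolding policy_graph_def by (simp add: if_distrib if_distribR cong: if_cong)

locale weakly_communicating_smdp =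
  fixes P :: "('s::finite, 'a::finite) smdp" and C :: "'s set"
  assumes kernel: "smdp_kernel P"
    and closed: "closed_set P C"
    and communicating: "communicating P C"
    and transient: "\<And>s \<pi>. s \<notin> C \<Longrightarrow> is_policy \<pi> \<Longrightarrow> transient_under P \<pi> s"
begin

abbreviation p where "p \<equiv> ptrans P"

lemma reaches_class:
  assumes "is_policy \<pi>"
  shows "\<exists>u\<in>C. reachable_under P \<pi> s u"
proof (rule ccontr)
  assume no_class: "\<not> (\<exists>u\<in>C. reachable_under P \<pi> s u)"
  let ?R = "\<lambda>u. {w. reachable_under P \<pi> u w}"
  \<comment> \<open>a reachable state with the fewest reachable states cannot be transient\<close>
  obtain u where u: "reachable_under P \<pi> s u"
    and min: "\<And>w. reachable_under P \<pi> s w \<Longrightarrow> card (?R u) \<le> card (?R w)"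
    using ex_has_least_nat[of "reachable_under P \<pi> s" s "\<lambda>u. card (?R u)"]
    by (auto simp: reachable_under_def)
  obtain w where w: "reachable_under P \<pi> u w" "\<not> reachable_under P \<pi> w u"
    using transient[OF _ assms] u no_class unfolding transient_under_def by blast
  then have "?R w \<subset> ?R u" unfolding reachable_under_def by auto
  then have "card (?R w) < card (?R u)" by (intro psubset_card_mono) auto
  moreover have "reachable_under P \<pi> s w" using u w(1) unfolding reachable_under_def by simp
  ultimately show False using min by fastforce
qed

lemma transition_graph_reaches_class:
  assumes "z \<in> C"
  shows "(s, z) \<in> (transition_graph P)\<^sup>*"
proof -
  define \<pi>0 where "\<pi>0 = (\<lambda>(u::'s) (a::'a). 1 / real CARD('a))"
  have "is_policy \<pi>0" unfolding is_policy_def \<pi>0_def by simp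
  then obtain u where "u \<in> C" "(s, u) \<in> (policy_graph P \<pi>0)\<^sup>*"
    using reaches_class unfolding reachable_under_def by blast
  moreover obtain \<pi> where "is_policy \<pi>" "(u, z) \<in> (policy_graph P \<pi>)\<^sup>*"
    using communicating \<open>u \<in> C\<close> assms unfolding communicating_def reachable_under_def by blast
  ultimately show ?thesis
    using rtrancl_mono[OF policy_graph_subset_transition_graph] \<open>is_policy \<pi>0\<close>
    by (blast intro: rtrancl_trans)
qed

primrec backward_reach :: "'s \<Rightarrow> nat \<Rightarrow> 's set" where
  "backward_reach z 0 = {z}"
| "backward_reach z (Suc j) = backward_reach z j \<union> {s. \<exists>a s'. s' \<in> backward_reach z j \<and> 0 < p s a s'}"

lemma mono_backward_reach: "mono (backward_reach z)"
  unfolding mono_iff_le_Suc by auto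

lemma backward_reach_exhausts: "\<exists>J. \<forall>z\<in>C. backward_reach z J = UNIV"
proof -
  have "\<exists>j. s \<in> backward_reach z j" if "z \<in> C" for z s
    using transition_graph_reaches_class[OF that, of s]
  proof (induction rule: converse_rtrancl_induct)
    case (step u v)
    then obtain j a where "v \<in> backward_reach z j" "0 < p u a v"
      unfolding transition_graph_def by blast
    then have "u \<in> backward_reach z (Suc j)" by auto
    then show ?case by blast
  qed (auto intro: exI[of _ 0])
  then have "\<exists>j. zs \<in> {(z, s). z \<in> C \<longrightarrow> s \<in> backward_reach z j}" for zs
    by (cases zs) auto
  moreover have "mono (\<lambda>j. {(z, s). z \<in> C \<longrightarrow> s \<in> backward_reach z j})"
    using monoD[OF mono_backward_reach] by (intro monoI) blast
  ultimately obtain J where "{(z, s). z \<in> C \<longrightarrow> s \<in> backward_reach z J} = UNIV"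
    using finite_chain_exhausts by blast
  then show ?thesis by blast
qed

primrec attractor :: "nat \<Rightarrow> 's set" where
  "attractor 0 = C"
| "attractor (Suc j) = attractor j \<union> {s. \<forall>a. \<exists>s'\<in>attractor j. 0 < p s a s'}"

lemma mono_attractor: "mono attractor"
  unfolding mono_iff_le_Suc by auto

lemma avoiding_action:
  assumes "s \<notin> (\<Union>j. attractor j)"
  shows "\<exists>a. \<forall>s'\<in>(\<Union>j. attractor j). \<not> 0 < p s a s'"
proof (rule ccontr)
  assume "\<not> ?thesis"
  then have "\<exists>j. a \<in> {a. \<exists>s'\<in>attractor j. 0 < p s a s'}" for a by blast
  moreover have "mono (\<lambda>j. {a. \<exists>s'\<in>attractor j. 0 < p s a s'})"
    using monoD[OF mono_attractor] by (intro monoI) blast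
  ultimately obtain J where "{a. \<exists>s'\<in>attractor J. 0 < p s a s'} = UNIV"
    using finite_chain_exhausts by blast
  then have "s \<in> attractor (Suc J)" by auto
  with assms show False by blast
qed

lemma attractor_exhausts: "\<exists>J. attractor J = UNIV"
proof (rule finite_chain_exhausts[OF mono_attractor], rule ccontr)
  fix s assume "\<not> (\<exists>j. s \<in> attractor j)"
  define K where "K = (\<Union>j. attractor j)"
  \<comment> \<open>a policy that never enters \<open>K\<close> from outside contradicts \<open>reaches_class\<close>, as \<open>C \<subseteq> K\<close>\<close>
  define d where "d u = (SOME a. \<forall>s'\<in>K. \<not> 0 < p u a s')" for u
  have d: "\<not> 0 < p u (d u) s'" if "u \<notin> K" "s' \<in> K" for u s'
    using someI_ex[OF avoiding_action[folded K_def, OF \<open>u \<notin> K\<close>]] that unfolding d_def by blast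
  let ?\<pi> = "\<lambda>u a. if a = d u then 1 else 0 :: real"
  have "u \<notin> K" if "(s, u) \<in> (policy_graph P ?\<pi>)\<^sup>*" for u
    using that
  proof (induction rule: rtrancl_induct)
    case base
    then show ?case using \<open>\<not> (\<exists>j. s \<in> attractor j)\<close> unfolding K_def by blast
  next
    case (step v u)
    then show ?case using d[of v u] policy_graph_deterministic[of v u] by blast
  qed
  moreover have "C \<subseteq> K" unfolding K_def using attractor.simps(1) by blast
  ultimately show False
    using reaches_class[OF is_policy_deterministic] unfolding reachable_under_def by blast
qed

end

section \<open>The flow of \<open>T\<^sup>o - id\<close>\<close>

locale bellman_flow = weakly_communicating_smdp P C
  for P :: "('s::finite, 'a::finite) smdp" and C +
  fixes \<alpha> :: real
  assumes alpha_pos: "0 < \<alpha>" and alpha_le_tmean: "\<And>s a. \<alpha> \<le> tmean P s a"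
begin

definition rate :: "'s \<Rightarrow> 'a \<Rightarrow> real" where
  "rate s a = \<alpha> / tmean P s a"

lemma rate_pos: "0 < rate s a" and rate_le_1: "rate s a \<le> 1"
  using alpha_pos alpha_le_tmean[of s a] unfolding rate_def by auto

definition state_max :: "real^('s \<times> 'a) \<Rightarrow> 's \<Rightarrow> real" where
  "state_max q s = (MAX a. q $ (s, a))"

definition expected_max :: "real^('s \<times> 'a) \<Rightarrow> 's \<Rightarrow> 'a \<Rightarrow> real" where
  "expected_max q s a = (\<Sum>s'\<in>UNIV. p s a s' * state_max q s')"

definition drift :: "real^('s \<times> 'a) \<Rightarrow> real^('s \<times> 'a)" where
  "drift q = Tzero P \<alpha> q - q"

lemma drift_nth: "drift q $ (s, a) = rate s a * (expected_max q s a - q $ (s, a))"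
  by (simp add: drift_def Tzero_def rate_def expected_max_def state_max_def algebra_simps)

lemma nth_le_state_max: "q $ (s, a) \<le> state_max q s"
  unfolding state_max_def by (rule Max_ge) auto

lemma state_max_le_iff: "state_max q s \<le> b \<longleftrightarrow> (\<forall>a. q $ (s, a) \<le> b)"
  unfolding state_max_def by (subst Max_le_iff) auto

lemma state_max_shift: "state_max (q + c *\<^sub>R 1) s = state_max q s + c"
  unfolding state_max_def by (simp add: Max_add_commute)

lemma drift_shift: "drift (q + c *\<^sub>R 1) = drift q"
proof -
  have "expected_max (q + c *\<^sub>R 1) s a = expected_max q s a + c" for s a
    using sum_ptrans_eq_1[OF kernel, of s a]
    by (simp add: expected_max_def state_max_shift distrib_left sum.distrib sum_distrib_right[symmetric])
  then show ?thesis by (simp add: vec_eq_iff drift_nth algebra_simps)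
qed

lemma drift_zero: "drift 0 = 0"
  by (simp add: vec_eq_iff drift_nth expected_max_def state_max_def)

lemma expected_max_upper:
  assumes "\<And>s'. 0 < p s a s' \<Longrightarrow> state_max q s' \<le> M"
  shows "expected_max q s a + p s a s' * (M - state_max q s') \<le> M"
  unfolding expected_max_def
  by (rule convex_combination_upper) (use assms sum_ptrans_eq_1[OF kernel] ptrans_nonneg in auto)

lemma expected_max_lower:
  assumes "\<And>s'. m \<le> state_max q s'"
  shows "m + p s a s' * (state_max q s' - m) \<le> expected_max q s a"
  unfolding expected_max_def
  by (rule convex_combination_lower) (use assms sum_ptrans_eq_1[OF kernel] ptrans_nonneg in auto)

lemma ex_successor: "\<exists>s'. 0 < p s a s'"
  using sum_ptrans_eq_1[OF kernel, of s a] sum_nonpos[of UNIV "p s a"] by (force simp: not_less)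

lemma expected_max_le:
  assumes "\<And>s'. 0 < p s a s' \<Longrightarrow> state_max q s' \<le> M"
  shows "expected_max q s a \<le> M"
proof -
  obtain s' where "0 < p s a s'" using ex_successor by blast
  then have "0 \<le> p s a s' * (M - state_max q s')" using assms by simp
  then show ?thesis using expected_max_upper[of s a q M s', OF assms] by linarith
qed

lemma expected_max_ge:
  assumes "\<And>s'. m \<le> state_max q s'"
  shows "m \<le> expected_max q s a"
proof -
  have "0 \<le> p s a s * (state_max q s - m)" using assms[of s] by (simp add: ptrans_nonneg)
  then show ?thesis using expected_max_lower[of m q s a s, OF assms] by linarith
qed

lemma solution_upper_bound_on_closed:
  assumes sol: "ode_solution drift y" and "0 \<le> t0" "t0 \<le> t"
    and S: "closed_set P S" and start: "\<And>s a. s \<in> S \<Longrightarrow> y t0 $ (s, a) \<le> M" and "s \<in> S"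
  shows "y t $ (s, a) \<le> M"
proof (rule max_principle[where I = "S \<times> UNIV" and u = "\<lambda>i t. y t $ i"
      and u' = "\<lambda>i t. drift (y t) $ i" and i = "(s, a)"])
  fix i t assume "i \<in> S \<times> UNIV" "t0 < t" and top: "\<forall>j\<in>S \<times> UNIV. y t $ j \<le> y t $ i"
  then obtain s a where i: "i = (s, a)" "s \<in> S" by auto
  have "expected_max (y t) s a \<le> y t $ i"
  proof (rule expected_max_le)
    fix s' assume "0 < p s a s'"
    then have "s' \<in> S" using S i unfolding closed_set_def by blast
    then show "state_max (y t) s' \<le> y t $ i" using top unfolding state_max_le_iff by blast
  qed
  then show "drift (y t) $ i \<le> 0"
    unfolding i drift_nth using rate_pos[of s a] by (simp add: i mult_le_0_iff)
next
  show "\<And>i. i \<in> S \<times> UNIV \<Longrightarrow> continuous_on {t0..} (\<lambda>t. y t $ i)"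
    using ode_solution_nth_continuous_on[OF sol \<open>0 \<le> t0\<close>] by blast
  show "\<And>i t. t0 < t \<Longrightarrow> ((\<lambda>t. y t $ i) has_real_derivative drift (y t) $ i) (at t)"
    using ode_solution_nth_derivative[OF sol] \<open>0 \<le> t0\<close> by simp
qed (use start \<open>s \<in> S\<close> \<open>t0 \<le> t\<close> in auto)

lemma solution_lower_bound:
  assumes sol: "ode_solution drift y" and "0 \<le> t0" "t0 \<le> t" and start: "\<And>i. m \<le> y t0 $ i"
  shows "m \<le> y t $ i"
proof -
  have "- y t $ i \<le> - m"
  proof (rule max_principle[where I = UNIV and u = "\<lambda>i t. - y t $ i"
        and u' = "\<lambda>i t. - drift (y t) $ i"])
    fix i t assume "t0 < t" and bottom: "\<forall>j\<in>UNIV. - y t $ j \<le> - y t $ i"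
    obtain s a where i: "i = (s, a)" by fastforce
    have "y t $ i \<le> state_max (y t) s'" for s'
      using bottom[rule_format, of "(s', a)"] nth_le_state_max[of "y t" s' a] by simp
    then have "y t $ i \<le> expected_max (y t) s a" by (rule expected_max_ge)
    then show "- drift (y t) $ i \<le> 0"
      unfolding i drift_nth using rate_pos[of s a] by simp
  next
    show "\<And>i. continuous_on {t0..} (\<lambda>t. - y t $ i)"
      using ode_solution_nth_continuous_on[OF sol \<open>0 \<le> t0\<close>] by (intro continuous_on_minus)
    show "\<And>i t. t0 < t \<Longrightarrow> ((\<lambda>t. - y t $ i) has_real_derivative - drift (y t) $ i) (at t)"
      using ode_solution_nth_derivative[OF sol] \<open>0 \<le> t0\<close> by (intro DERIV_minus) simp
  qed (use start \<open>t0 \<le> t\<close> in auto)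
  then show ?thesis by simp
qed

lemma solution_state_max_lower:
  assumes "ode_solution drift y" and "0 \<le> t0" "t0 \<le> t" and "\<And>i. m \<le> y t0 $ i"
  shows "m \<le> state_max (y t) s"
  using solution_lower_bound[OF assms, of "(s, undefined)"] nth_le_state_max order_trans by blast

lemma solution_upper_bound:
  assumes "ode_solution drift y" and "0 \<le> t0" "t0 \<le> t" and "\<And>i. y t0 $ i \<le> M"
  shows "y t $ i \<le> M"
  using solution_upper_bound_on_closed[OF assms(1-3), of UNIV M "fst i" "snd i"] assms(4)
  by (simp add: closed_set_def)

lemma max_entry_antimono:
  assumes "ode_solution drift y" and "0 \<le> s" "s \<le> t"
  shows "max_entry (y t) \<le> max_entry (y s)"
proof -
  have "y t $ i \<le> max_entry (y s)" for i
    by (rule solution_upper_bound[OF assms]) (rule nth_le_max_entry)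
  then show ?thesis by (simp add: max_entry_le_iff)
qed

lemma min_entry_mono:
  assumes "ode_solution drift y" and "0 \<le> s" "s \<le> t"
  shows "min_entry (y s) \<le> min_entry (y t)"
proof -
  have "min_entry (y s) \<le> y t $ i" for i
    by (rule solution_lower_bound[OF assms]) (rule min_entry_le_nth)
  then show ?thesis by (simp add: le_min_entry_iff)
qed

lemma solution_norm_le:
  assumes sol: "ode_solution drift y" and "0 \<le> t"
  shows "norm (y t) \<le> CARD('s \<times> 'a) * norm (y 0)"
proof -
  have "\<bar>y t $ i\<bar> \<le> norm (y 0)" for i
  proof -
    have "y 0 $ j \<le> norm (y 0)" "- norm (y 0) \<le> y 0 $ j" for j
      using component_le_norm_cart[of "y 0" j] by auto
    then have "y t $ i \<le> norm (y 0)" "- norm (y 0) \<le> y t $ i"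
      using solution_upper_bound[OF sol _ \<open>0 \<le> t\<close>] solution_lower_bound[OF sol _ \<open>0 \<le> t\<close>] by auto
    then show ?thesis by simp
  qed
  then have "(\<Sum>i\<in>UNIV. \<bar>y t $ i\<bar>) \<le> CARD('s \<times> 'a) * norm (y 0)"
    using sum_bounded_above[of UNIV "\<lambda>i. \<bar>y t $ i\<bar>" "norm (y 0)"] by simp
  then show ?thesis using norm_le_l1_cart[of "y t"] by linarith
qed

text \<open>Over one unit of time, a gap \<open>\<delta>\<close> above a lower bound at a successor \<open>s'\<close> of \<open>(s, a)\<close>
  is passed on to the entry \<open>(s, a)\<close> as a gap of at least \<open>lift_rate * \<delta>\<close>.\<close>

definition lift_rate :: real where
  "lift_rate = Min ((\<lambda>(s, a, s'). p s a s' * (1 - exp (- rate s a))) ` {(s, a, s'). 0 < p s a s'})"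

lemma lift_rate_le: "0 < p s a s' \<Longrightarrow> lift_rate \<le> p s a s' * (1 - exp (- rate s a))"
  unfolding lift_rate_def by (rule Min_le) (auto intro: image_eqI[where x = "(s, a, s')"])

lemma lift_rate_pos: "0 < lift_rate"
  unfolding lift_rate_def using ex_successor rate_pos by (subst Min_gr_iff) auto

lemma lift_rate_le_1: "lift_rate \<le> 1"
proof -
  obtain s a s' where "0 < p s a s'" using ex_successor by blast
  moreover have "p s a s' \<le> 1"
    using member_le_sum[of s' UNIV "p s a"] sum_ptrans_eq_1[OF kernel] ptrans_nonneg by fastforce
  then have "p s a s' * (1 - exp (- rate s a)) \<le> 1"
    using rate_pos[of s a] by (intro mult_le_one) auto
  ultimately show ?thesis using lift_rate_le by fastforce
qed

lemma entry_lift_lower: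
  assumes sol: "ode_solution drift y" and "0 \<le> t0" "t0 + 1 \<le> t"
    and start: "\<And>i. m \<le> y t0 $ i"
    and succ: "\<And>t'. t0 \<le> t' \<Longrightarrow> t' \<le> t \<Longrightarrow> m + \<delta> \<le> state_max (y t') s'"
    and "0 < p s a s'" "0 \<le> \<delta>"
  shows "m + lift_rate * \<delta> \<le> y t $ (s, a)"
proof -
  have "m + (m + p s a s' * \<delta> - m) * (1 - exp (- rate s a)) \<le> y t $ (s, a)"
  proof (rule relaxation_gain_lower[where g = "\<lambda>t. y t $ (s, a)" and g' = "\<lambda>t. drift (y t) $ (s, a)"])
    fix t' assume t': "t0 < t'" "t' < t"
    have "m \<le> state_max (y t') s''" for s''
      using solution_state_max_lower[OF sol \<open>0 \<le> t0\<close> _ start] t' by simp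
    moreover have "p s a s' * \<delta> \<le> p s a s' * (state_max (y t') s' - m)"
      using succ[of t'] t' by (intro mult_left_mono) (auto simp: ptrans_nonneg)
    ultimately have "m + p s a s' * \<delta> \<le> expected_max (y t') s a"
      using expected_max_lower[of m "y t'" s a s'] by fastforce
    then show "rate s a * (m + p s a s' * \<delta> - y t' $ (s, a)) \<le> drift (y t') $ (s, a)"
      unfolding drift_nth using rate_pos[of s a] by (intro mult_left_mono) auto
  next
    show "continuous_on {t0..t} (\<lambda>t. y t $ (s, a))"
      using sol \<open>0 \<le> t0\<close> by (rule ode_solution_nth_continuous_on_interval)
    show "\<And>t'. t0 < t' \<Longrightarrow> t' < t \<Longrightarrow> ((\<lambda>t. y t $ (s, a)) has_real_derivative drift (y t') $ (s, a)) (at t')"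
      using ode_solution_nth_derivative[OF sol] \<open>0 \<le> t0\<close> by simp
  qed (use assms rate_pos in auto)
  moreover have "lift_rate * \<delta> \<le> p s a s' * \<delta> * (1 - exp (- rate s a))"
    using mult_left_mono[OF lift_rate_le[OF \<open>0 < p s a s'\<close>] \<open>0 \<le> \<delta>\<close>] by (simp add: ac_simps)
  ultimately show ?thesis by simp
qed

lemma entry_lift_upper:
  assumes sol: "ode_solution drift y" and "0 \<le> t0" "t0 + 1 \<le> t"
    and start: "\<And>i. y t0 $ i \<le> M"
    and succ: "\<And>t'. t0 \<le> t' \<Longrightarrow> t' \<le> t \<Longrightarrow> state_max (y t') s' \<le> M - \<delta>"
    and "0 < p s a s'" "0 \<le> \<delta>"
  shows "y t $ (s, a) \<le> M - lift_rate * \<delta>"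
proof -
  have "y t $ (s, a) \<le> M - (M - (M - p s a s' * \<delta>)) * (1 - exp (- rate s a))"
  proof (rule relaxation_gain_upper[where g = "\<lambda>t. y t $ (s, a)" and g' = "\<lambda>t. drift (y t) $ (s, a)"])
    fix t' assume t': "t0 < t'" "t' < t"
    have "state_max (y t') s'' \<le> M" for s''
      unfolding state_max_le_iff using solution_upper_bound[OF sol \<open>0 \<le> t0\<close> _ start] t' by simp
    moreover have "p s a s' * \<delta> \<le> p s a s' * (M - state_max (y t') s')"
      using succ[of t'] t' by (intro mult_left_mono) (auto simp: ptrans_nonneg)
    ultimately have "expected_max (y t') s a \<le> M - p s a s' * \<delta>"
      using expected_max_upper[of s a "y t'" M s'] by fastforce
    then show "drift (y t') $ (s, a) \<le> rate s a * (M - p s a s' * \<delta> - y t' $ (s, a))"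
      unfolding drift_nth using rate_pos[of s a] by (intro mult_left_mono) auto
  next
    show "continuous_on {t0..t} (\<lambda>t. y t $ (s, a))"
      using sol \<open>0 \<le> t0\<close> by (rule ode_solution_nth_continuous_on_interval)
    show "\<And>t'. t0 < t' \<Longrightarrow> t' < t \<Longrightarrow> ((\<lambda>t. y t $ (s, a)) has_real_derivative drift (y t') $ (s, a)) (at t')"
      using ode_solution_nth_derivative[OF sol] \<open>0 \<le> t0\<close> by simp
  qed (use assms rate_pos ptrans_nonneg in auto)
  moreover have "lift_rate * \<delta> \<le> p s a s' * \<delta> * (1 - exp (- rate s a))"
    using mult_left_mono[OF lift_rate_le[OF \<open>0 < p s a s'\<close>] \<open>0 \<le> \<delta>\<close>] by (simp add: ac_simps)
  ultimately show ?thesis by simp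
qed

lemma entry_decay_lower:
  assumes sol: "ode_solution drift y" and "0 \<le> t0" "t0 \<le> t" and start: "\<And>i. m \<le> y t0 $ i"
  shows "m + exp (- (t - t0)) * (y t0 $ (s, a) - m) \<le> y t $ (s, a)"
proof -
  have "m + exp (- rate s a * (t - t0)) * (y t0 $ (s, a) - m) \<le> y t $ (s, a)"
  proof (rule relaxation_lower_bound[where g' = "\<lambda>t. drift (y t) $ (s, a)"])
    fix t' assume t': "t0 < t'" "t' < t"
    have "m \<le> expected_max (y t') s a"
      using solution_state_max_lower[OF sol \<open>0 \<le> t0\<close> _ start] t' by (intro expected_max_ge) simp
    then show "rate s a * (m - y t' $ (s, a)) \<le> drift (y t') $ (s, a)"
      unfolding drift_nth using rate_pos[of s a] by (intro mult_left_mono) auto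
  next
    show "continuous_on {t0..t} (\<lambda>t. y t $ (s, a))"
      using sol \<open>0 \<le> t0\<close> by (rule ode_solution_nth_continuous_on_interval)
    show "\<And>t'. t0 < t' \<Longrightarrow> t' < t \<Longrightarrow> ((\<lambda>t. y t $ (s, a)) has_real_derivative drift (y t') $ (s, a)) (at t')"
      using ode_solution_nth_derivative[OF sol] \<open>0 \<le> t0\<close> by simp
  qed fact
  moreover have "exp (- (t - t0)) \<le> exp (- rate s a * (t - t0))"
    using mult_right_mono[OF rate_le_1[of s a], of "t - t0"] \<open>t0 \<le> t\<close> by simp
  then have "exp (- (t - t0)) * (y t0 $ (s, a) - m) \<le> exp (- rate s a * (t - t0)) * (y t0 $ (s, a) - m)"
    using start[of "(s, a)"] by (intro mult_right_mono) auto
  ultimately show ?thesis by simp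
qed

lemma lift_rate_power_Suc_le: "0 \<le> \<delta> \<Longrightarrow> lift_rate ^ Suc j * \<delta> \<le> lift_rate ^ j * \<delta>"
  using lift_rate_pos lift_rate_le_1 by (intro mult_right_mono power_decreasing) auto

lemma backward_reach_lower_bound:
  assumes sol: "ode_solution drift y" and "0 \<le> t0" and start: "\<And>i. m \<le> y t0 $ i" and "0 \<le> \<delta>"
    and target: "\<And>t. t0 \<le> t \<Longrightarrow> t \<le> T \<Longrightarrow> m + \<delta> \<le> state_max (y t) z"
  shows "s \<in> backward_reach z j \<Longrightarrow> t0 + j \<le> t \<Longrightarrow> t \<le> T \<Longrightarrow> m + lift_rate ^ j * \<delta> \<le> state_max (y t) s"
proof (induction j arbitrary: s t)
  case 0
  then show ?case using target by simp
next
  case (Suc j)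
  show ?case
  proof (cases "s \<in> backward_reach z j")
    case True
    then have "m + lift_rate ^ j * \<delta> \<le> state_max (y t) s" using Suc by simp
    then show ?thesis using lift_rate_power_Suc_le[OF \<open>0 \<le> \<delta>\<close>, of j] by linarith
  next
    case False
    then obtain a s' where s': "s' \<in> backward_reach z j" "0 < p s a s'" using Suc.prems(1) by auto
    have "m \<le> y (t0 + j) $ i" for i
      by (rule solution_lower_bound[OF sol \<open>0 \<le> t0\<close> _ start]) simp
    moreover have "m + lift_rate ^ j * \<delta> \<le> state_max (y t') s'" if "t0 + j \<le> t'" "t' \<le> t" for t'
      using Suc.IH[OF s'(1) that(1)] that(2) Suc.prems(3) by simp
    ultimately have "m + lift_rate * (lift_rate ^ j * \<delta>) \<le> y t $ (s, a)"
      using entry_lift_lower[OF sol, of "t0 + j" t m "lift_rate ^ j * \<delta>" s' s a] s'(2)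
        \<open>0 \<le> t0\<close> \<open>0 \<le> \<delta>\<close> lift_rate_pos Suc.prems(2) by simp
    then show ?thesis using nth_le_state_max[of "y t" s a] by simp
  qed
qed

lemma min_entry_rises:
  assumes sol: "ode_solution drift y" and "0 \<le> t0" and start: "\<And>i. m \<le> y t0 $ i"
    and reach: "backward_reach z J = UNIV" and high: "m + \<delta> \<le> y t0 $ (z, a)" and "0 \<le> \<delta>"
    and "t0 + J + 1 \<le> t"
  shows "m + exp (- real (J + 1)) * lift_rate ^ (J + 1) * \<delta> \<le> min_entry (y t)"
proof -
  define T where "T = t0 + J + 1"
  have target: "m + exp (- real (J + 1)) * \<delta> \<le> state_max (y t') z" if "t0 \<le> t'" "t' \<le> T" for t'
  proof -
    have "exp (- real (J + 1)) * \<delta> \<le> exp (- (t' - t0)) * (y t0 $ (z, a) - m)"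
      using that high \<open>0 \<le> \<delta>\<close> unfolding T_def by (intro mult_mono) auto
    then show ?thesis
      using entry_decay_lower[OF sol \<open>0 \<le> t0\<close> that(1) start, of z a] nth_le_state_max[of "y t'" z a]
      by linarith
  qed
  have spread: "m + lift_rate ^ J * (exp (- real (J + 1)) * \<delta>) \<le> state_max (y t') s''"
    if "t0 + J \<le> t'" "t' \<le> T" for t' s''
    by (rule backward_reach_lower_bound[OF sol \<open>0 \<le> t0\<close> start _ target]) (use that reach \<open>0 \<le> \<delta>\<close> in auto)
  have later: "m \<le> y (t0 + J) $ i" for i
    by (rule solution_lower_bound[OF sol \<open>0 \<le> t0\<close> _ start]) simp
  have "m + lift_rate * (lift_rate ^ J * (exp (- real (J + 1)) * \<delta>)) \<le> y T $ (s, b)" for s b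
  proof -
    obtain s' where "0 < p s b s'" using ex_successor by blast
    then show ?thesis
      using entry_lift_lower[OF sol, of "t0 + J" T m _ s' s b] spread later \<open>0 \<le> t0\<close> \<open>0 \<le> \<delta>\<close>
        lift_rate_pos by (simp add: T_def)
  qed
  then have "m + exp (- real (J + 1)) * lift_rate ^ (J + 1) * \<delta> \<le> min_entry (y T)"
    by (simp add: le_min_entry_iff ac_simps)
  also have "\<dots> \<le> min_entry (y t)"
    using min_entry_mono[OF sol] \<open>0 \<le> t0\<close> \<open>t0 + J + 1 \<le> t\<close> unfolding T_def by simp
  finally show ?thesis .
qed

lemma attractor_upper_bound:
  assumes sol: "ode_solution drift y" and "0 \<le> t0" and start: "\<And>i. y t0 $ i \<le> M" and "0 \<le> \<delta>"
    and class_low: "\<And>s a. s \<in> C \<Longrightarrow> y t0 $ (s, a) \<le> M - \<delta>"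
  shows "s \<in> attractor j \<Longrightarrow> t0 + j \<le> t \<Longrightarrow> y t $ (s, a) \<le> M - lift_rate ^ j * \<delta>"
proof (induction j arbitrary: s a t)
  case 0
  then show ?case using solution_upper_bound_on_closed[OF sol \<open>0 \<le> t0\<close> _ closed class_low] by simp
next
  case (Suc j)
  show ?case
  proof (cases "s \<in> attractor j")
    case True
    then have "y t $ (s, a) \<le> M - lift_rate ^ j * \<delta>" using Suc by simp
    then show ?thesis using lift_rate_power_Suc_le[OF \<open>0 \<le> \<delta>\<close>, of j] by linarith
  next
    case False
    then obtain s' where s': "s' \<in> attractor j" "0 < p s a s'" using Suc.prems(1) by auto
    have "y (t0 + j) $ i \<le> M" for i
      by (rule solution_upper_bound[OF sol \<open>0 \<le> t0\<close> _ start]) simp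
    moreover have "state_max (y t') s' \<le> M - lift_rate ^ j * \<delta>" if "t0 + j \<le> t'" for t'
      using Suc.IH[OF s'(1) that] by (simp add: state_max_le_iff)
    ultimately have "y t $ (s, a) \<le> M - lift_rate * (lift_rate ^ j * \<delta>)"
      using entry_lift_upper[OF sol, of "t0 + j" t M s' "lift_rate ^ j * \<delta>" s a] s'(2)
        \<open>0 \<le> t0\<close> \<open>0 \<le> \<delta>\<close> lift_rate_pos Suc.prems(2) by simp
    then show ?thesis by simp
  qed
qed

lemma max_entry_falls:
  assumes sol: "ode_solution drift y" and "0 \<le> t0" and start: "\<And>i. y t0 $ i \<le> M"
    and attract: "attractor J = UNIV" and class_low: "\<And>s a. s \<in> C \<Longrightarrow> y t0 $ (s, a) \<le> M - \<delta>"
    and "0 \<le> \<delta>" "t0 + J \<le> t"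
  shows "max_entry (y t) \<le> M - lift_rate ^ J * \<delta>"
  using attractor_upper_bound[OF sol \<open>0 \<le> t0\<close> start \<open>0 \<le> \<delta>\<close> class_low] attract \<open>t0 + J \<le> t\<close>
  by (simp add: max_entry_le_iff)

lemma span_contracts_within:
  assumes reach: "\<forall>z\<in>C. backward_reach z JL = UNIV" and attract: "attractor JK = UNIV"
    and sol: "ode_solution drift y" and "0 \<le> (t0::real)"
  defines "\<eta> \<equiv> min (exp (- real (JL + 1)) * lift_rate ^ (JL + 1)) (lift_rate ^ JK) / 2"
    and "T \<equiv> t0 + real (max (JL + 1) JK)"
  shows "max_entry (y T) - min_entry (y T) \<le> (1 - \<eta>) * (max_entry (y t0) - min_entry (y t0))"
proof -
  define m M where "m = min_entry (y t0)" and "M = max_entry (y t0)"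
  have start: "m \<le> y t0 $ i" "y t0 $ i \<le> M" for i
    unfolding m_def M_def by (rule min_entry_le_nth nth_le_max_entry)+
  have "0 \<le> M - m" using start[of undefined] by simp
  have later: "m \<le> min_entry (y T)" "max_entry (y T) \<le> M"
    using min_entry_mono[OF sol \<open>0 \<le> t0\<close>] max_entry_antimono[OF sol \<open>0 \<le> t0\<close>]
    unfolding m_def M_def T_def by auto
  show ?thesis
  proof (cases "\<exists>z\<in>C. \<exists>a. m + (M - m) / 2 \<le> y t0 $ (z, a)")
    case True
    then obtain z a where "z \<in> C" and high: "m + (M - m) / 2 \<le> y t0 $ (z, a)" by blast
    have "\<eta> * (M - m) \<le> exp (- real (JL + 1)) * lift_rate ^ (JL + 1) * ((M - m) / 2)"
      unfolding \<eta>_def using \<open>0 \<le> M - m\<close> by (simp add: mult_right_mono)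
    moreover have "m + exp (- real (JL + 1)) * lift_rate ^ (JL + 1) * ((M - m) / 2) \<le> min_entry (y T)"
      by (rule min_entry_rises[OF sol \<open>0 \<le> t0\<close> start(1) reach[rule_format, OF \<open>z \<in> C\<close>] high])
        (use \<open>0 \<le> M - m\<close> in \<open>simp_all add: T_def\<close>)
    ultimately have "max_entry (y T) - min_entry (y T) \<le> (M - m) - \<eta> * (M - m)"
      using later by linarith
    then show ?thesis unfolding m_def M_def by (simp add: algebra_simps)
  next
    case False
    have "y t0 $ (s, a) \<le> M - (M - m) / 2" if "s \<in> C" for s a
    proof -
      have "y t0 $ (s, a) < m + (M - m) / 2" using False that by (auto simp: not_le)
      then show ?thesis by (simp add: field_simps)
    qed
    then have "max_entry (y T) \<le> M - lift_rate ^ JK * ((M - m) / 2)"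
      by (rule max_entry_falls[OF sol \<open>0 \<le> t0\<close> start(2) attract]) (use \<open>0 \<le> M - m\<close> in \<open>simp_all add: T_def\<close>)
    moreover have "\<eta> * (M - m) \<le> lift_rate ^ JK * ((M - m) / 2)"
      unfolding \<eta>_def using \<open>0 \<le> M - m\<close> by (simp add: mult_right_mono)
    ultimately have "max_entry (y T) - min_entry (y T) \<le> (M - m) - \<eta> * (M - m)"
      using later by linarith
    then show ?thesis unfolding m_def M_def by (simp add: algebra_simps)
  qed
qed

lemma solution_tendsto_constant:
  assumes sol: "ode_solution drift y"
  shows "((\<lambda>t. y t $ i) \<longlongrightarrow> (INF t\<in>{0..}. max_entry (y t))) at_top"
proof (rule monotone_squeeze_tendsto)
  obtain JL JK where reach: "\<forall>z\<in>C. backward_reach z JL = UNIV" and attract: "attractor JK = UNIV"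
    using backward_reach_exhausts attractor_exhausts by blast
  define \<eta> where "\<eta> = min (exp (- real (JL + 1)) * lift_rate ^ (JL + 1)) (lift_rate ^ JK) / 2"
  have "lift_rate ^ JK \<le> 1"
    using lift_rate_pos lift_rate_le_1 by (simp add: power_le_one)
  then have "0 < \<eta>" "\<eta> \<le> 1"
    unfolding \<eta>_def using lift_rate_pos by auto
  show "((\<lambda>t. max_entry (y t) - min_entry (y t)) \<longlongrightarrow> 0) at_top"
  proof (rule periodic_contraction_tendsto_zero[OF _ _ _ \<open>0 < \<eta>\<close> \<open>\<eta> \<le> 1\<close>])
    show "max_entry (y (t + real (max (JL + 1) JK))) - min_entry (y (t + real (max (JL + 1) JK)))
        \<le> (1 - \<eta>) * (max_entry (y t) - min_entry (y t))" if "0 \<le> t" for t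
      using span_contracts_within[OF reach attract sol that] unfolding \<eta>_def .
    show "0 \<le> max_entry (y t) - min_entry (y t)" for t
      using min_entry_le_nth[of "y t" undefined] nth_le_max_entry[of "y t" undefined] by simp
    show "max_entry (y t) - min_entry (y t) \<le> max_entry (y s) - min_entry (y s)" if "0 \<le> s" "s \<le> t" for s t
      using max_entry_antimono[OF sol that] min_entry_mono[OF sol that] by simp
  qed simp
qed (use min_entry_mono[OF sol] max_entry_antimono[OF sol] min_entry_le_nth nth_le_max_entry in auto)

end

section \<open>The flow with feedback along the diagonal\<close>

lemma scaled_limit_zero:
  fixes f \<phi> :: "'a::real_normed_vector \<Rightarrow> real"
  assumes "((\<lambda>c. f (c *\<^sub>R 0) / c) \<longlongrightarrow> \<phi> 0) at_top"
  shows "\<phi> 0 = 0"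
proof -
  have "((\<lambda>c. f (c *\<^sub>R 0) / c) \<longlongrightarrow> 0) at_top"
    by (simp add: tendsto_divide_0[OF tendsto_const filterlim_at_top_imp_at_infinity[OF filterlim_ident]])
  with assms show ?thesis using tendsto_unique[OF trivial_limit_at_top_linorder] by blast
qed

lemma scaled_limit_lipschitz:
  fixes f \<phi> :: "'a::real_normed_vector \<Rightarrow> real"
  assumes lip: "L-lipschitz_on UNIV f"
    and lim: "\<And>x. ((\<lambda>c. f (c *\<^sub>R x) / c) \<longlongrightarrow> \<phi> x) at_top"
  shows "L-lipschitz_on UNIV \<phi>"
proof (rule lipschitz_onI)
  show "0 \<le> L" using lip by (rule lipschitz_on_nonneg)
  fix x z :: 'a
  show "dist (\<phi> x) (\<phi> z) \<le> L * dist x z"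
  proof (rule tendsto_upperbound[OF tendsto_dist[OF lim lim]])
    have "dist (f (c *\<^sub>R x) / c) (f (c *\<^sub>R z) / c) \<le> L * dist x z" if "0 < c" for c
    proof -
      have "dist (f (c *\<^sub>R x)) (f (c *\<^sub>R z)) \<le> L * dist (c *\<^sub>R x) (c *\<^sub>R z)"
        using lip by (rule lipschitz_onD) auto
      also have "dist (c *\<^sub>R x) (c *\<^sub>R z) = c * dist x z"
        using that by (simp add: dist_norm scaleR_diff_right[symmetric])
      finally show ?thesis
        using that by (simp add: dist_real_def diff_divide_distrib[symmetric] divide_le_eq algebra_simps)
    qed
    then show "\<forall>\<^sub>F c in at_top. dist (f (c *\<^sub>R x) / c) (f (c *\<^sub>R z) / c) \<le> L * dist x z"
      by (blast intro: eventually_mono[OF eventually_gt_at_top[of 0]])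
  qed simp
qed

locale feedback_flow = bellman_flow P C \<alpha>
  for P :: "('s::finite, 'a::finite) smdp" and C \<alpha> +
  fixes finf :: "real^('s \<times> 'a) \<Rightarrow> real" and L :: real
  assumes finf_lipschitz: "L-lipschitz_on UNIV finf"
    and finf_strict_mono: "strict_mono (\<lambda>c. finf (c *\<^sub>R 1))"
    and finf_zero: "finf 0 = 0"
begin

definition field :: "real^('s \<times> 'a) \<Rightarrow> real^('s \<times> 'a)" where
  "field q = drift q - (\<alpha> * finf q) *\<^sub>R 1"

definition restoring_margin :: "real \<Rightarrow> real" where
  "restoring_margin \<rho> = min (finf (\<rho> *\<^sub>R 1)) (- finf ((- \<rho>) *\<^sub>R 1))"

lemma restoring_margin_pos: "0 < \<rho> \<Longrightarrow> 0 < restoring_margin \<rho>"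
  unfolding restoring_margin_def using strict_monoD[OF finf_strict_mono, of 0 \<rho>]
    strict_monoD[OF finf_strict_mono, of "- \<rho>" 0] finf_zero by simp

lemma L_nonneg: "0 \<le> L"
  using finf_lipschitz by (rule lipschitz_on_nonneg)

lemma finf_continuous: "continuous_on UNIV finf"
  using finf_lipschitz by (rule lipschitz_on_continuous_on)

lemma feedback_sign:
  assumes "\<rho> \<le> \<bar>w\<bar>"
  shows "\<bar>w\<bar> * (restoring_margin \<rho> - L * norm (q - w *\<^sub>R 1)) \<le> w * finf q"
proof -
  have err: "\<bar>finf q - finf (w *\<^sub>R 1)\<bar> \<le> L * norm (q - w *\<^sub>R 1)"
    using lipschitz_onD[OF finf_lipschitz, of q "w *\<^sub>R 1"] by (simp add: dist_norm dist_real_def)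
  have mono: "finf (c *\<^sub>R 1) \<le> finf (d *\<^sub>R 1)" if "c \<le> d" for c d
    using strict_mono_less_eq[OF finf_strict_mono] that by blast
  show ?thesis
  proof (cases "0 \<le> w")
    case True
    then have "restoring_margin \<rho> \<le> finf (w *\<^sub>R 1)"
      using mono[of \<rho> w] assms unfolding restoring_margin_def by simp
    then have "restoring_margin \<rho> - L * norm (q - w *\<^sub>R 1) \<le> finf q" using err by linarith
    then show ?thesis using True by (simp add: mult_left_mono)
  next
    case False
    then have "finf (w *\<^sub>R 1) \<le> - restoring_margin \<rho>"
      using mono[of w "- \<rho>"] assms unfolding restoring_margin_def by simp
    then have "restoring_margin \<rho> - L * norm (q - w *\<^sub>R 1) \<le> - finf q" using err by linarith
    then have "- w * (restoring_margin \<rho> - L * norm (q - w *\<^sub>R 1)) \<le> - w * (- finf q)"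
      using False by (intro mult_left_mono) auto
    then show ?thesis using False by simp
  qed
qed

lemma feedback_stays_small:
  assumes cont: "continuous_on {0..} w"
    and deriv: "\<And>t. 0 < t \<Longrightarrow> (w has_real_derivative - \<alpha> * finf (x t)) (at t)"
    and "w 0 = 0" "0 < \<rho>" and small: "\<And>t. 0 \<le> t \<Longrightarrow> L * norm (x t - w t *\<^sub>R 1) < restoring_margin \<rho>"
    and "0 \<le> t"
  shows "\<bar>w t\<bar> < \<rho>"
proof (rule stays_in_interval[OF cont deriv])
  fix s assume "0 < s" "\<bar>w s\<bar> = \<rho>"
  then have "0 < \<bar>w s\<bar> * (restoring_margin \<rho> - L * norm (x s - w s *\<^sub>R 1))"
    using small[of s] \<open>0 < \<rho>\<close> by simp
  also have "\<dots> \<le> w s * finf (x s)"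
    using feedback_sign[of \<rho> "w s" "x s"] \<open>\<bar>w s\<bar> = \<rho>\<close> by simp
  finally show "w s * (- \<alpha> * finf (x s)) < 0"
    using alpha_pos by (simp add: mult_pos_pos mult.left_commute)
qed (use assms in auto)

lemma feedback_inward:
  assumes "e \<le> \<bar>w\<bar>" "0 < e" and close: "(L + 1) * norm (q - w *\<^sub>R 1) \<le> restoring_margin e / 2"
  shows "w * (- \<alpha> * finf q) \<le> - (\<alpha> * e * restoring_margin e / 2)"
proof -
  have "L * norm (q - w *\<^sub>R 1) \<le> (L + 1) * norm (q - w *\<^sub>R 1)"
    by (simp add: distrib_right)
  then have "e * (restoring_margin e / 2) \<le> \<bar>w\<bar> * (restoring_margin e - L * norm (q - w *\<^sub>R 1))"
    using assms restoring_margin_pos[of e] by (intro mult_mono) auto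
  also have "\<dots> \<le> w * finf q" using feedback_sign[OF \<open>e \<le> \<bar>w\<bar>\<close>] .
  finally show ?thesis using alpha_pos by (simp add: mult_left_mono mult.left_commute)
qed

lemma feedback_tendsto_zero:
  assumes cont: "continuous_on {0..} w"
    and deriv: "\<And>t. 0 < t \<Longrightarrow> (w has_real_derivative - \<alpha> * finf (x t)) (at t)"
    and gap: "((\<lambda>t. x t - w t *\<^sub>R 1) \<longlongrightarrow> 0) at_top"
  shows "(w \<longlongrightarrow> 0) at_top"
proof (rule tendstoI)
  fix e :: real assume "0 < e"
  define \<kappa> where "\<kappa> = \<alpha> * e * restoring_margin e / 2"
  have "0 < \<kappa>" unfolding \<kappa>_def using alpha_pos \<open>0 < e\<close> restoring_margin_pos by simp
  have "\<forall>\<^sub>F t in at_top. (L + 1) * norm (x t - w t *\<^sub>R 1) < restoring_margin e / 2"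
    by (rule order_tendstoD(2)[OF tendsto_mult_right_zero[OF tendsto_norm_zero[OF gap]]])
      (use restoring_margin_pos[OF \<open>0 < e\<close>] in simp)
  then have "\<forall>\<^sub>F t in at_top. (L + 1) * norm (x t - w t *\<^sub>R 1) < restoring_margin e / 2 \<and> 0 \<le> t"
    using eventually_ge_at_top[of 0] by (rule eventually_conj)
  then obtain T where T: "\<And>t. T \<le> t \<Longrightarrow> (L + 1) * norm (x t - w t *\<^sub>R 1) < restoring_margin e / 2 \<and> 0 \<le> t"
    unfolding eventually_at_top_linorder by blast
  have inward: "w t * (- \<alpha> * finf (x t)) \<le> - \<kappa>" if "T \<le> t" "e \<le> \<bar>w t\<bar>" for t
    unfolding \<kappa>_def using feedback_inward[OF that(2) \<open>0 < e\<close>] T[OF that(1)] by simp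
  have cont_T: "continuous_on {t..} w" if "T \<le> t" for t
    using that T[of T] by (intro continuous_on_subset[OF cont]) auto
  obtain t1 where "T \<le> t1" "\<bar>w t1\<bar> < e"
    using reaches_interval[OF cont_T[OF order_refl], of "\<lambda>t. - \<alpha> * finf (x t)" e \<kappa>]
      deriv inward T[of T] \<open>0 < \<kappa>\<close> by force
  then have "\<bar>w t\<bar> < e" if "t1 \<le> t" for t
  proof (intro stays_in_interval[OF cont_T deriv, of t1 e t])
    fix s assume "t1 < s" "\<bar>w s\<bar> = e"
    then have "w s * (- \<alpha> * finf (x s)) \<le> - \<kappa>" using inward[of s] \<open>T \<le> t1\<close> by simp
    then show "w s * (- \<alpha> * finf (x s)) < 0" using \<open>0 < \<kappa>\<close> by simp
  qed (use that T[of T] in auto)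
  then show "\<forall>\<^sub>F t in at_top. dist (w t) 0 < e"
    by (auto intro: eventually_mono[OF eventually_ge_at_top[of t1]])
qed

definition accumulated_feedback :: "(real \<Rightarrow> real^('s \<times> 'a)) \<Rightarrow> real \<Rightarrow> real" where
  "accumulated_feedback x t = - \<alpha> * integral {0..t} (\<lambda>s. finf (x s))"

lemma accumulated_feedback_derivative:
  assumes sol: "ode_solution field x" and "0 \<le> t"
  shows "(accumulated_feedback x has_real_derivative - \<alpha> * finf (x t)) (at t within {0..})"
proof -
  have "continuous_on {0..t + 1} (\<lambda>s. finf (x s))"
    using continuous_on_subset[OF ode_solution_continuous_on[OF sol]]
    by (intro continuous_on_compose2[OF finf_continuous]) auto
  then have "((\<lambda>u. integral {0..u} (\<lambda>s. finf (x s))) has_real_derivative finf (x t)) (at t within {0..t + 1})"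
    using \<open>0 \<le> t\<close> by (intro integral_has_real_derivative) auto
  moreover have "at t within {0..t + 1} = at t within {0..}"
    by (rule at_within_nhd[where S = "{..<t + 1}"]) auto
  ultimately have "((\<lambda>u. integral {0..u} (\<lambda>s. finf (x s))) has_real_derivative finf (x t)) (at t within {0..})"
    by simp
  from DERIV_cmult[OF this, of "- \<alpha>"] show ?thesis
    unfolding accumulated_feedback_def[abs_def] by simp
qed

lemma accumulated_feedback_derivative_at:
  assumes "ode_solution field x" and "0 < t"
  shows "(accumulated_feedback x has_real_derivative - \<alpha> * finf (x t)) (at t)"
proof -
  have "at t within {0..} = at t" using \<open>0 < t\<close> by (intro at_within_interior) auto
  moreover have "(accumulated_feedback x has_real_derivative - \<alpha> * finf (x t)) (at t within {0..})"
    using accumulated_feedback_derivative[OF assms(1)] \<open>0 < t\<close> by simp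
  ultimately show ?thesis by simp
qed

lemma accumulated_feedback_continuous_on:
  assumes "ode_solution field x"
  shows "continuous_on {0..} (accumulated_feedback x)"
  using DERIV_continuous[OF accumulated_feedback_derivative[OF assms]]
  by (simp add: continuous_on_eq_continuous_within)

lemma field_solution_shift:
  assumes sol: "ode_solution field x"
  shows "ode_solution drift (\<lambda>t. x t - accumulated_feedback x t *\<^sub>R 1)"
  unfolding ode_solution_def
proof (intro allI impI)
  fix t :: real assume "0 \<le> t"
  have "((\<lambda>t. x t - accumulated_feedback x t *\<^sub>R 1) has_vector_derivative
      field (x t) - (- \<alpha> * finf (x t)) *\<^sub>R 1) (at t within {0..})"
    using sol \<open>0 \<le> t\<close> accumulated_feedback_derivative[OF sol \<open>0 \<le> t\<close>] unfolding ode_solution_def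
    by (auto intro!: derivative_eq_intros)
  moreover have "field (x t) - (- \<alpha> * finf (x t)) *\<^sub>R 1 = drift (x t - accumulated_feedback x t *\<^sub>R 1)"
    using drift_shift[of "x t" "- accumulated_feedback x t"] by (simp add: field_def)
  ultimately show "((\<lambda>t. x t - accumulated_feedback x t *\<^sub>R 1) has_vector_derivative
      drift (x t - accumulated_feedback x t *\<^sub>R 1)) (at t within {0..})" by simp
qed

lemma field_solution_tendsto_zero:
  assumes sol: "ode_solution field x"
  shows "(x \<longlongrightarrow> 0) at_top"
proof -
  define r where "r = accumulated_feedback x"
  define y where "y t = x t - r t *\<^sub>R 1" for t
  define c where "c = (INF t\<in>{0..}. max_entry (y t))"
  have "ode_solution drift y"
    using field_solution_shift[OF sol] unfolding y_def r_def .
  then have "((\<lambda>t. y t $ i - c) \<longlongrightarrow> c - c) at_top" for i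
    unfolding c_def by (intro tendsto_diff solution_tendsto_constant tendsto_const)
  then have gap: "((\<lambda>t. y t - c *\<^sub>R 1) \<longlongrightarrow> 0) at_top"
    by (intro vec_tendstoI) simp
  have "((\<lambda>t. c + r t) \<longlongrightarrow> 0) at_top"
  proof (rule feedback_tendsto_zero)
    show "continuous_on {0..} (\<lambda>t. c + r t)"
      unfolding r_def by (intro continuous_intros accumulated_feedback_continuous_on[OF sol])
    show "((\<lambda>t. c + r t) has_real_derivative - \<alpha> * finf (x t)) (at t)" if "0 < t" for t
      unfolding r_def using accumulated_feedback_derivative_at[OF sol that] by (auto intro!: derivative_eq_intros)
    show "((\<lambda>t. x t - (c + r t) *\<^sub>R 1) \<longlongrightarrow> 0) at_top"
      using gap unfolding y_def by (simp add: algebra_simps scaleR_add_left)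
  qed
  with gap have "((\<lambda>t. (y t - c *\<^sub>R 1) + (c + r t) *\<^sub>R 1) \<longlongrightarrow> 0 + 0 *\<^sub>R 1) at_top"
    by (intro tendsto_intros)
  then show ?thesis unfolding y_def by (simp add: algebra_simps scaleR_add_left)
qed

lemma field_solution_norm_less:
  assumes sol: "ode_solution field x" and "0 < \<rho>" and "0 \<le> t"
    and small: "(L + 1) * (CARD('s \<times> 'a) * norm (x 0)) < restoring_margin \<rho>"
  shows "norm (x t) < CARD('s \<times> 'a) * (norm (x 0) + \<rho>)"
proof -
  define n where "n = real CARD('s \<times> 'a)"
  have "0 < n" unfolding n_def by simp
  define r where "r = accumulated_feedback x"
  define y where "y s = x s - r s *\<^sub>R 1" for s
  have "r 0 = 0" unfolding r_def accumulated_feedback_def by simp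
  have "ode_solution drift y" using field_solution_shift[OF sol] unfolding y_def r_def .
  moreover have "y 0 = x 0" unfolding y_def using \<open>r 0 = 0\<close> by simp
  ultimately have ny: "norm (y s) \<le> n * norm (x 0)" if "0 \<le> s" for s
    using solution_norm_le[OF _ that] unfolding n_def by metis
  have "\<bar>r t\<bar> < \<rho>"
  proof (rule feedback_stays_small[OF _ _ _ \<open>0 < \<rho>\<close> _ \<open>0 \<le> t\<close>])
    show "L * norm (x s - r s *\<^sub>R 1) < restoring_margin \<rho>" if "0 \<le> s" for s
    proof -
      have "L * norm (y s) \<le> (L + 1) * (n * norm (x 0))"
        using ny[OF that] L_nonneg by (intro mult_mono) auto
      then show ?thesis using small unfolding y_def n_def by linarith
    qed
  qed (use accumulated_feedback_continuous_on[OF sol] accumulated_feedback_derivative_at[OF sol]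
      \<open>r 0 = 0\<close> in \<open>auto simp: r_def\<close>)
  have "\<bar>r t\<bar> * norm (1 :: real^('s \<times> 'a)) \<le> \<bar>r t\<bar> * n"
    using norm_le_l1_cart[of "1 :: real^('s \<times> 'a)"] unfolding n_def by (intro mult_left_mono) auto
  also have "\<dots> < \<rho> * n" using \<open>\<bar>r t\<bar> < \<rho>\<close> \<open>0 < n\<close> by (rule mult_strict_right_mono)
  finally have "norm (y t) + \<bar>r t\<bar> * norm (1 :: real^('s \<times> 'a)) < n * norm (x 0) + \<rho> * n"
    using ny[OF \<open>0 \<le> t\<close>] by linarith
  moreover have "norm (x t) \<le> norm (y t) + \<bar>r t\<bar> * norm (1 :: real^('s \<times> 'a))"
    using norm_triangle_ineq[of "y t" "r t *\<^sub>R 1"] unfolding y_def by simp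
  ultimately show ?thesis unfolding n_def by (simp add: algebra_simps)
qed

lemma field_lyapunov_stable: "lyapunov_stable field 0"
  unfolding lyapunov_stable_def
proof (intro allI impI)
  fix \<epsilon> :: real assume "0 < \<epsilon>"
  define n where "n = real CARD('s \<times> 'a)"
  have "0 < n" unfolding n_def by simp
  define \<rho> where "\<rho> = \<epsilon> / (2 * n)"
  define \<delta> where "\<delta> = min \<rho> (restoring_margin \<rho> / ((L + 1) * n))"
  have "0 < \<rho>" using \<open>0 < \<epsilon>\<close> \<open>0 < n\<close> unfolding \<rho>_def by simp
  then have "0 < \<delta>" using restoring_margin_pos L_nonneg \<open>0 < n\<close> unfolding \<delta>_def by simp
  show "\<exists>\<delta>>0. \<forall>x. ode_solution field x \<and> dist (x 0) 0 < \<delta> \<longrightarrow> (\<forall>t\<ge>0. dist (x t) 0 < \<epsilon>)"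
  proof (intro exI[of _ \<delta>] conjI allI impI \<open>0 < \<delta>\<close>)
    fix x and t :: real assume "ode_solution field x \<and> dist (x 0) 0 < \<delta>" "0 \<le> t"
    then have sol: "ode_solution field x" and "norm (x 0) < \<delta>" by auto
    have "(L + 1) * (n * norm (x 0)) < (L + 1) * (n * \<delta>)"
      using \<open>norm (x 0) < \<delta>\<close> \<open>0 < n\<close> L_nonneg by simp
    also have "\<dots> \<le> (L + 1) * (n * (restoring_margin \<rho> / ((L + 1) * n)))"
      using \<open>0 < n\<close> L_nonneg unfolding \<delta>_def by (intro mult_left_mono) auto
    also have "\<dots> = restoring_margin \<rho>" using \<open>0 < n\<close> L_nonneg by simp
    finally have "norm (x t) < n * (norm (x 0) + \<rho>)"
      using field_solution_norm_less[OF sol \<open>0 < \<rho>\<close> \<open>0 \<le> t\<close>] unfolding n_def by blast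
    also have "\<dots> \<le> n * (\<rho> + \<rho>)"
      using \<open>norm (x 0) < \<delta>\<close> \<open>0 < n\<close> unfolding \<delta>_def by (intro mult_left_mono) auto
    also have "\<dots> = \<epsilon>" using \<open>0 < n\<close> unfolding \<rho>_def by simp
    finally show "dist (x t) 0 < \<epsilon>" by simp
  qed
qed

lemma field_zero: "field 0 = 0"
  by (simp add: field_def drift_zero finf_zero)

lemma GAS_field: "GAS_equilibrium field 0"
  unfolding GAS_equilibrium_def using field_zero field_solution_tendsto_zero field_lyapunov_stable by blast

lemma GAS_field_unique:
  assumes "GAS_equilibrium field z"
  shows "z = 0"
proof -
  have "ode_solution field (\<lambda>t. 0)" unfolding ode_solution_def field_zero by simp
  then have "((\<lambda>t::real. 0) \<longlongrightarrow> z) at_top" using assms unfolding GAS_equilibrium_def by blast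
  then show "z = 0" by (simp add: tendsto_const_iff)
qed

end

theorem proposition4p2:
  fixes P :: "('s::finite, 'a::finite) smdp"
    and f finf :: "real^('s \<times> 'a) \<Rightarrow> real"
    and \<alpha> :: real
  assumes "smdp_kernel P"
    and "assumption_M P"
    and "weakly_communicating P"
    and "assumption_F f finf"
    and "0 < \<alpha>" and "\<forall>s a. \<alpha> \<le> tmean P s a"
  shows "GAS_equilibrium (\<lambda>q. Tzero P \<alpha> q - q - (\<alpha> * finf q) *\<^sub>R 1) 0 \<and>
         (\<forall>z. GAS_equilibrium (\<lambda>q. Tzero P \<alpha> q - q - (\<alpha> * finf q) *\<^sub>R 1) z \<longrightarrow> z = 0)"
proof -
  \<comment> \<open>(M) is needed only for the stochastic approximation scheme, not for its limiting ODE\<close>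
  obtain C where C: "closed_comm_class P C"
    and transient: "\<forall>s. s \<notin> C \<longrightarrow> (\<forall>\<pi>. is_policy \<pi> \<longrightarrow> transient_under P \<pi> s)"
    using \<open>weakly_communicating P\<close> unfolding weakly_communicating_def by blast
  obtain L where "L-lipschitz_on UNIV f"
    and lim: "\<And>x. ((\<lambda>c. f (c *\<^sub>R x) / c) \<longlongrightarrow> finf x) at_top" and "SISTr finf 0"
    using \<open>assumption_F f finf\<close> unfolding assumption_F_def by blast
  interpret feedback_flow P C \<alpha> finf L
  proof unfold_locales
    show "closed_set P C" "communicating P C" using C unfolding closed_comm_class_def by blast+
    show "L-lipschitz_on UNIV finf" using \<open>L-lipschitz_on UNIV f\<close> lim by (rule scaled_limit_lipschitz)
    show "finf 0 = 0" using lim by (rule scaled_limit_zero)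
    show "strict_mono (\<lambda>c. finf (c *\<^sub>R 1))" using \<open>SISTr finf 0\<close> unfolding SISTr_def by simp
  qed (use assms transient in blast)+
  have "(\<lambda>q. Tzero P \<alpha> q - q - (\<alpha> * finf q) *\<^sub>R 1) = field"
    by (simp add: fun_eq_iff field_def drift_def)
  then show ?thesis using GAS_field GAS_field_unique by simp
qed

end
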